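(* Let $X$ be a random vector in $\mathbb{R}^n$ such that $X\in B$ almost surely, where $B$ is a Borel subset of $\mathbb{R}^n$. Suppose there exist a measurable function $d:B\to\mathbb{R}^m$ and a constant $c>0$ such that $$\|d(x)-d(y)\|\ge c\,\|x-y\|\qquad\forall x,y\in B$$ (for some norms on $\mathbb{R}^m$ and $\mathbb{R}^n$). Then $\mathbb{P}\big(X\in\mathcal{C}_m(X)\big)=1$.
   Context: For a random vector $X$ in $\mathbb{R}^n$ and an integer $m\ge0$, the $m$-dimensional mould $\mathcal{C}_m(X)$ is the set of all $x\in\mathbb{R}^n$ such that $\liminf_{\epsilon\to0^+}\mathbb{P}(\|X-x\|_2<\epsilon)/\epsilon^m>0$. *)

theory Defs
  imports "HOL-Probability.Probability"
begin

text \<open>A norm on a real vector space (the paper allows arbitrary norms on R^n and R^m).\<close>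
definition is_norm :: "('v::real_vector \<Rightarrow> real) \<Rightarrow> bool" where
  "is_norm N \<longleftrightarrow> (\<forall>x. 0 \<le> N x) \<and> (\<forall>x. N x = 0 \<longleftrightarrow> x = 0)
     \<and> (\<forall>a x. N (a *\<^sub>R x) = \<bar>a\<bar> * N x) \<and> (\<forall>x y. N (x + y) \<le> N x + N y)"

definition mould :: "'a measure \<Rightarrow> ('a \<Rightarrow> real^'n) \<Rightarrow> nat \<Rightarrow> (real^'n) set" where
  "mould M X m = {x. Liminf (at_right (0::real))
      (\<lambda>e. ereal (measure M {\<omega> \<in> space M. norm (X \<omega> - x) < e} / e ^ m)) > 0}"

end

theory Submission
  imports Defs
begin

text \<open>Norms on Euclidean space are equivalent, so the hypothesis on \<open>d\<close> says that \<open>d\<close> is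
  inverse-Lipschitz on \<open>B\<close>: \<open>norm (x - y) \<le> L * norm (d x - d y)\<close>. Let \<open>\<nu>\<close> be the law of
  \<open>d(X)\<close>. For \<open>x \<in> B\<close> the preimage of \<open>ball (d x) r\<close> lies, almost surely, in
  \<open>{norm (X - x) < L r}\<close>, so \<open>\<nu>(ball (d x) r) \<le> P(norm (X - x) < L r)\<close>. Hence if \<open>x\<close> is not in
  the \<open>m\<close>-dimensional mould, then \<open>\<nu>\<close> has lower \<open>m\<close>-dimensional density zero at \<open>d x\<close>. By the
  Vitali covering lemma, the points of zero lower density of a finite Borel measure on \<open>\<real>\<^sup>m\<close>
  form a null set of that measure, so almost surely \<open>X\<close> lies in the mould. Finally, the mould
  is a Borel set, because by monotonicity in the radius its liminf may be computed along
  dyadic radii.\<close>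

section \<open>Norms on Euclidean space\<close>

lemma is_normD:
  assumes "is_norm N"
  shows is_norm_nonneg: "0 \<le> N x"
    and is_norm_eq_0_iff: "N x = 0 \<longleftrightarrow> x = 0"
    and is_norm_scaleR: "N (a *\<^sub>R x) = \<bar>a\<bar> * N x"
    and is_norm_triangle: "N (x + y) \<le> N x + N y"
  using assms unfolding is_norm_def by blast+

lemma is_norm_minus_commute:
  assumes "is_norm N"
  shows "N (x - y) = N (y - x)"
  using is_norm_scaleR[OF assms, of "-1" "x - y"] by simp

lemma is_norm_sum_le:
  assumes "is_norm N"
  shows "N (sum f S) \<le> (\<Sum>i\<in>S. N (f i))"
proof (induction S rule: infinite_finite_induct)
  case (insert i S)
  then show ?case using is_norm_triangle[OF assms, of "f i" "sum f S"] by simp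
qed (use is_norm_eq_0_iff[OF assms, of 0] in simp_all)

lemma is_norm_le_norm:
  fixes N :: "'a::euclidean_space \<Rightarrow> real"
  assumes "is_norm N"
  obtains C where "C > 0" "\<And>x. N x \<le> C * norm x"
proof
  let ?C = "1 + (\<Sum>b\<in>Basis. N b)"
  show "?C > 0" using is_norm_nonneg[OF assms] by (simp add: add_pos_nonneg sum_nonneg)
  fix x :: 'a
  have "N x = N (\<Sum>b\<in>Basis. (x \<bullet> b) *\<^sub>R b)" by (simp add: euclidean_representation)
  also have "\<dots> \<le> (\<Sum>b\<in>Basis. \<bar>x \<bullet> b\<bar> * N b)"
    by (rule order_trans[OF is_norm_sum_le[OF assms]]) (simp add: is_norm_scaleR[OF assms])
  also have "\<dots> \<le> (\<Sum>b\<in>Basis. norm x * N b)"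
    by (intro sum_mono mult_right_mono) (auto simp: Basis_le_norm is_norm_nonneg[OF assms])
  also have "\<dots> \<le> ?C * norm x" by (simp add: sum_distrib_left algebra_simps)
  finally show "N x \<le> ?C * norm x" .
qed

lemma is_norm_continuous_on:
  fixes N :: "'a::euclidean_space \<Rightarrow> real"
  assumes "is_norm N"
  shows "continuous_on S N"
proof -
  obtain C where C: "C > 0" "\<And>x. N x \<le> C * norm x" using is_norm_le_norm[OF assms] by blast
  have "dist (N x) (N y) \<le> C * dist x y" for x y
    using is_norm_triangle[OF assms, of y "x - y"] is_norm_triangle[OF assms, of x "y - x"]
      C(2)[of "x - y"] is_norm_minus_commute[OF assms, of x y]
    by (simp add: dist_real_def dist_norm)
  then have "C-lipschitz_on S N" using C(1) by (intro lipschitz_onI) auto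
  then show ?thesis by (rule lipschitz_on_continuous_on)
qed

text \<open>The minimum of \<open>N\<close> on the compact unit sphere is positive.\<close>
lemma norm_le_is_norm:
  fixes N :: "'a::euclidean_space \<Rightarrow> real"
  assumes "is_norm N"
  obtains a where "a > 0" "\<And>x. a * norm x \<le> N x"
proof -
  obtain b :: 'a where "b \<in> Basis" using nonempty_Basis by blast
  then have "sphere (0::'a) 1 \<noteq> {}" by (auto intro!: exI[of _ b])
  then obtain x0 where x0: "x0 \<in> sphere 0 1" "\<And>y. y \<in> sphere 0 1 \<Longrightarrow> N x0 \<le> N y"
    using continuous_attains_inf[OF compact_sphere _ is_norm_continuous_on[OF assms]] by blast
  have "N x0 * norm x \<le> N x" for x
  proof (cases "x = 0")
    case False
    then have "N x0 \<le> N ((1 / norm x) *\<^sub>R x)" by (intro x0(2)) simp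
    then show ?thesis using False by (simp add: is_norm_scaleR[OF assms] field_simps)
  qed (simp add: is_norm_nonneg[OF assms])
  moreover have "N x0 > 0"
    using x0(1) is_norm_eq_0_iff[OF assms, of x0] is_norm_nonneg[OF assms, of x0] by auto
  ultimately show ?thesis using that by blast
qed

lemma expanding_map_inverse_Lipschitz:
  fixes d :: "'a::euclidean_space \<Rightarrow> 'b::euclidean_space"
  assumes "is_norm Na" "is_norm Nb" "c > 0"
    and "\<And>x y. x \<in> B \<Longrightarrow> y \<in> B \<Longrightarrow> c * Na (x - y) \<le> Nb (d x - d y)"
  obtains L where "L > 0" "\<And>x y. x \<in> B \<Longrightarrow> y \<in> B \<Longrightarrow> norm (x - y) \<le> L * norm (d x - d y)"
proof -
  obtain a where a: "a > 0" "\<And>x. a * norm x \<le> Na x" using norm_le_is_norm[OF assms(1)] by blast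
  obtain C where C: "C > 0" "\<And>y. Nb y \<le> C * norm y" using is_norm_le_norm[OF assms(2)] by blast
  show ?thesis
  proof
    show "C / (c * a) > 0" using a C assms(3) by simp
    fix x y assume "x \<in> B" "y \<in> B"
    have "(c * a) * norm (x - y) \<le> c * Na (x - y)" using a(2) assms(3) by (simp add: mult.assoc)
    also have "\<dots> \<le> C * norm (d x - d y)" using assms(4)[OF \<open>x \<in> B\<close> \<open>y \<in> B\<close>] C(2) by (rule order_trans)
    finally show "norm (x - y) \<le> C / (c * a) * norm (d x - d y)"
      using a(1) assms(3) by (simp add: field_simps)
  qed
qed

section \<open>Small-ball probabilities and the mould\<close>

definition small_ball_prob :: "'a measure \<Rightarrow> ('a \<Rightarrow> 'b::real_normed_vector) \<Rightarrow> 'b \<Rightarrow> real \<Rightarrow> real" where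
  "small_ball_prob M X x e = measure M {\<omega> \<in> space M. norm (X \<omega> - x) < e}"

lemma mould_iff_eventually:
  "x \<in> mould M X m \<longleftrightarrow>
     (\<exists>a>0. eventually (\<lambda>e. a * e ^ m < small_ball_prob M X x e) (at_right 0))"
proof -
  let ?f = "\<lambda>e. small_ball_prob M X x e / e ^ m"
  have ratio: "eventually (\<lambda>e. a * e ^ m < small_ball_prob M X x e \<longleftrightarrow> a < ?f e) (at_right 0)" for a
    using eventually_at_right_less[of "0::real"] by eventually_elim (simp add: field_simps)
  have "0 < Liminf (at_right 0) (\<lambda>e. ereal (?f e)) \<longleftrightarrow> (\<exists>a>0. eventually (\<lambda>e. a < ?f e) (at_right 0))"
  proof
    assume "0 < Liminf (at_right 0) (\<lambda>e. ereal (?f e))"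
    then obtain a where "0 < ereal a" "ereal a < Liminf (at_right 0) (\<lambda>e. ereal (?f e))"
      using ereal_dense2 by blast
    then have "a > 0" "eventually (\<lambda>e. ereal a < ereal (?f e)) (at_right 0)"
      by (auto dest: less_LiminfD)
    then show "\<exists>a>0. eventually (\<lambda>e. a < ?f e) (at_right 0)" by auto
  next
    assume "\<exists>a>0. eventually (\<lambda>e. a < ?f e) (at_right 0)"
    then obtain a where "a > 0" "eventually (\<lambda>e. a < ?f e) (at_right 0)" by blast
    then have "ereal a \<le> Liminf (at_right 0) (\<lambda>e. ereal (?f e))"
      by (intro Liminf_bounded) (auto elim: eventually_mono)
    with \<open>a > 0\<close> show "0 < Liminf (at_right 0) (\<lambda>e. ereal (?f e))"
      by (metis ereal_less(2) less_le_trans)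
  qed
  also have "\<dots> \<longleftrightarrow> (\<exists>a>0. eventually (\<lambda>e. a * e ^ m < small_ball_prob M X x e) (at_right 0))"
    by (simp only: eventually_subst[OF ratio])
  finally show ?thesis unfolding mould_def small_ball_prob_def by simp
qed

lemma small_ball_prob_mono:
  fixes X :: "'a \<Rightarrow> 'b::euclidean_space"
  assumes "finite_measure M" and [measurable]: "X \<in> borel_measurable M" and "e \<le> e'"
  shows "small_ball_prob M X x e \<le> small_ball_prob M X x e'"
proof -
  have "{\<omega> \<in> space M. norm (X \<omega> - x) < e'} \<in> sets M" by measurable
  then show ?thesis
    unfolding small_ball_prob_def using assms by (intro finite_measure.finite_measure_mono) auto
qed

lemma borel_measurable_small_ball_prob:
  fixes X :: "'a \<Rightarrow> 'b::euclidean_space"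
  assumes "finite_measure M" and [measurable]: "X \<in> borel_measurable M"
  shows "(\<lambda>x. small_ball_prob M X x e) \<in> borel_measurable borel"
proof -
  interpret finite_measure M by fact
  define Q where "Q = {p \<in> space (borel \<Otimes>\<^sub>M M). norm (X (snd p) - fst p) < e}"
  have "Q \<in> sets (borel \<Otimes>\<^sub>M M)" unfolding Q_def by measurable
  then have "(\<lambda>x. enn2real (emeasure M (Pair x -` Q))) \<in> borel_measurable borel"
    using measurable_emeasure_Pair by measurable
  moreover have "Pair x -` Q = {\<omega> \<in> space M. norm (X \<omega> - x) < e}" for x
    unfolding Q_def by (auto simp: space_pair_measure)
  ultimately show ?thesis unfolding small_ball_prob_def measure_def by simp
qed

lemma ex_power_bracket:
  fixes q e :: real
  assumes "q < 1" "0 < e" "e < 1"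
  obtains i where "q ^ Suc i \<le> e" "e < q ^ i"
proof -
  have "\<exists>i. q ^ i \<le> e" using real_arch_pow_inv[OF assms(2,1)] by (auto intro: less_imp_le)
  then have "\<exists>i. \<not> q ^ i \<le> e \<and> q ^ Suc i \<le> e"
    using assms(3) by (intro exists_least_lemma) auto
  then show ?thesis using that by (auto simp: not_le)
qed

text \<open>Since \<open>e \<mapsto> small_ball_prob M X x e\<close> is monotone, the liminf in the definition of the
  mould may be taken along the radii \<open>2\<^sup>-\<^sup>i\<close>; this makes the mould a Borel set.\<close>
lemma mould_eq_dyadic:
  fixes X :: "'a \<Rightarrow> real^'n"
  assumes "finite_measure M" "X \<in> borel_measurable M"
  shows "mould M X m = (\<Union>k. \<Union>j. \<Inter>i\<in>{j..}.
           {x. ((1/2) ^ i) ^ m / Suc k < small_ball_prob M X x ((1/2) ^ i)})"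
    (is "_ = ?R")
proof
  show "mould M X m \<subseteq> ?R"
  proof
    fix x assume "x \<in> mould M X m"
    then obtain a \<delta> where a: "a > 0" "\<delta> > 0"
      "\<And>e. 0 < e \<Longrightarrow> e < \<delta> \<Longrightarrow> a * e ^ m < small_ball_prob M X x e"
      unfolding mould_iff_eventually eventually_at_right_field by auto
    obtain k where k: "inverse (Suc k) < a" using reals_Archimedean[OF a(1)] by blast
    obtain j where j: "(1/2::real) ^ j < \<delta>" using real_arch_pow_inv[of \<delta> "1/2"] a(2) by auto
    have "((1/2) ^ i) ^ m / Suc k < small_ball_prob M X x ((1/2) ^ i)" if "j \<le> i" for i
    proof -
      have "(1/2::real) ^ i \<le> (1/2) ^ j" using that by (simp add: power_decreasing)
      then have "(1/2::real) ^ i < \<delta>" using j by linarith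
      then have "a * ((1/2) ^ i) ^ m < small_ball_prob M X x ((1/2) ^ i)" by (intro a(3)) auto
      moreover have "((1/2::real) ^ i) ^ m / Suc k < a * ((1/2) ^ i) ^ m"
        using k by (metis divide_inverse mult.commute mult_strict_left_mono zero_less_divide_1_iff
            zero_less_numeral zero_less_power)
      ultimately show ?thesis by linarith
    qed
    then show "x \<in> ?R" by blast
  qed
next
  show "?R \<subseteq> mould M X m"
  proof
    fix x assume "x \<in> ?R"
    then obtain k j where kj: "\<And>i. j \<le> i \<Longrightarrow>
        ((1/2) ^ i) ^ m / Suc k < small_ball_prob M X x ((1/2) ^ i)" by blast
    define a where "a = (1/2) ^ m / Suc k"
    have "a * e ^ m < small_ball_prob M X x e" if e: "0 < e" "e < (1/2) ^ j" for e
    proof -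
      have "(1/2::real) ^ j \<le> 1" by (simp add: power_le_one)
      then obtain i where i: "(1/2::real) ^ Suc i \<le> e" "e < (1/2) ^ i"
        using ex_power_bracket[of "1/2" e] e by auto
      then have "(1/2::real) ^ Suc i < (1/2) ^ j" using e(2) by linarith
      then have "j \<le> Suc i" by (subst (asm) power_strict_decreasing_iff) auto
      have "a * e ^ m \<le> a * ((1/2) ^ i) ^ m" unfolding a_def using i e by (intro mult_left_mono power_mono) auto
      also have "\<dots> = ((1/2) ^ Suc i) ^ m / Suc k" unfolding a_def power_Suc power_mult_distrib by simp
      also have "\<dots> < small_ball_prob M X x ((1/2) ^ Suc i)" by (rule kj) fact
      also have "\<dots> \<le> small_ball_prob M X x e" using assms i(1) by (rule small_ball_prob_mono)
      finally show ?thesis .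
    qed
    moreover have "a > 0" "(0::real) < (1/2) ^ j" unfolding a_def by auto
    ultimately show "x \<in> mould M X m"
      unfolding mould_iff_eventually eventually_at_right_field by blast
  qed
qed

lemma sets_borel_mould:
  fixes X :: "'a \<Rightarrow> real^'n"
  assumes "finite_measure M" "X \<in> borel_measurable M"
  shows "mould M X m \<in> sets borel"
proof -
  note [measurable] = borel_measurable_small_ball_prob[OF assms]
  show ?thesis unfolding mould_eq_dyadic[OF assms] by measurable
qed

section \<open>Points of zero lower density\<close>

definition zero_lower_density_points :: "'a::euclidean_space measure \<Rightarrow> 'a set" where
  "zero_lower_density_points \<nu> =
     {y. \<forall>t>0. \<forall>\<delta>>0. \<exists>r. 0 < r \<and> r < \<delta> \<and> measure \<nu> (ball y r) < t * r ^ DIM('a)}"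

lemma emeasure_UN_countable_le:
  assumes [measurable]: "\<And>i. i \<in> I \<Longrightarrow> A i \<in> sets M" and "countable I"
  shows "emeasure M (\<Union>(A ` I)) \<le> (\<integral>\<^sup>+i. emeasure M (A i) \<partial>count_space I)"
proof -
  have "indicator (\<Union>(A ` I)) x \<le> (\<integral>\<^sup>+i. indicator (A i) x \<partial>count_space I)" for x
  proof (cases "x \<in> \<Union>(A ` I)")
    case True
    then obtain j where j: "j \<in> I" "x \<in> A j" by auto
    have "(1::ennreal) = (\<integral>\<^sup>+i. indicator (A i) x * indicator {j} i \<partial>count_space I)"
      using j by (subst nn_integral_count_space'[where A="{j}"]) auto
    also have "\<dots> \<le> (\<integral>\<^sup>+i. indicator (A i) x \<partial>count_space I)"
      by (intro nn_integral_mono) (auto split: split_indicator)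
    finally show ?thesis using True by simp
  qed simp
  moreover have "\<Union>(A ` I) \<in> sets M" using assms by (intro sets.countable_UN') auto
  ultimately have "emeasure M (\<Union>(A ` I)) \<le> (\<integral>\<^sup>+x. \<integral>\<^sup>+i. indicator (A i) x \<partial>count_space I \<partial>M)"
    by (simp flip: nn_integral_indicator add: nn_integral_mono)
  also have "\<dots> = (\<integral>\<^sup>+i. \<integral>\<^sup>+x. indicator (A i) x \<partial>M \<partial>count_space I)"
    using assms by (intro nn_integral_count_space_nn_integral) auto
  also have "\<dots> = (\<integral>\<^sup>+i. emeasure M (A i) \<partial>count_space I)"
    by (intro nn_integral_cong) auto
  finally show ?thesis .
qed

lemma nn_integral_disjoint_cballs_le:
  fixes r :: "'a::euclidean_space \<Rightarrow> real"
  assumes "countable C" "pairwise (\<lambda>i j. disjnt (cball i (r i)) (cball j (r j))) C"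
    and "\<And>i. i \<in> C \<Longrightarrow> cball i (r i) \<subseteq> S" "S \<in> sets borel"
  shows "(\<integral>\<^sup>+i. emeasure lborel (cball i (r i)) \<partial>count_space C) \<le> emeasure lborel S"
proof -
  have "(\<integral>\<^sup>+i. emeasure lborel (cball i (r i)) \<partial>count_space C) = emeasure lborel (\<Union>i\<in>C. cball i (r i))"
    using assms(1,2) by (intro emeasure_UN_countable[symmetric])
      (auto simp: disjoint_family_on_def pairwise_def disjnt_def)
  also have "\<dots> \<le> emeasure lborel S" using assms(3,4) by (intro emeasure_mono) auto
  finally show ?thesis .
qed

lemma emeasure_ball_le_lborel_cball:
  fixes \<nu> :: "'a::euclidean_space measure"
  assumes "finite_measure \<nu>" "measure \<nu> (ball y s) \<le> t * s ^ DIM('a)" "0 \<le> s" "0 \<le> t" "c > 0"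
  shows "emeasure \<nu> (ball y s)
           \<le> ennreal (t * c ^ DIM('a) / unit_ball_vol DIM('a)) * emeasure lborel (cball y (s / c))"
proof -
  define \<kappa> where "\<kappa> = unit_ball_vol DIM('a)"
  have "\<kappa> > 0" unfolding \<kappa>_def by simp
  have "emeasure \<nu> (ball y s) \<le> ennreal (t * s ^ DIM('a))"
    using assms(2) by (simp add: finite_measure.emeasure_eq_measure[OF assms(1)] ennreal_leI)
  also have "t * s ^ DIM('a) = (t * c ^ DIM('a) / \<kappa>) * (\<kappa> * (s / c) ^ DIM('a))"
    using \<open>\<kappa> > 0\<close> \<open>c > 0\<close> by (simp add: power_divide)
  also have "ennreal \<dots> = ennreal (t * c ^ DIM('a) / \<kappa>) * ennreal (\<kappa> * (s / c) ^ DIM('a))"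
    using assms(3-5) \<open>\<kappa> > 0\<close> by (intro ennreal_mult) auto
  also have "ennreal (\<kappa> * (s / c) ^ DIM('a)) = emeasure lborel (cball y (s / c))"
    using assms(3,5) unfolding \<kappa>_def by (subst emeasure_cball) auto
  finally show ?thesis unfolding \<kappa>_def .
qed

text \<open>Vitali covering: the balls \<open>ball y (s y)\<close> of small \<open>\<nu>\<close>-mass are covered by the
  fivefold enlargements of disjoint balls \<open>cball y (s y / 6)\<close>, whose total Lebesgue measure is
  at most that of \<open>cball 0 (R + 1)\<close>.\<close>
lemma zero_lower_density_points_small_cover:
  fixes \<nu> :: "'a::euclidean_space measure"
  assumes "finite_measure \<nu>" "sets \<nu> = sets borel" "R > 0" "t > 0"
  obtains G where "G \<in> sets borel" "zero_lower_density_points \<nu> \<inter> ball 0 R \<subseteq> G"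
    "emeasure \<nu> G \<le> ennreal (t * 6 ^ DIM('a) * (R + 1) ^ DIM('a))"
proof -
  define K where "K = zero_lower_density_points \<nu> \<inter> ball 0 R"
  define c where "c = ennreal (t * 6 ^ DIM('a) / unit_ball_vol DIM('a))"
  have "\<forall>y\<in>K. \<exists>s. 0 < s \<and> s < 1 \<and> measure \<nu> (ball y s) < t * s ^ DIM('a)"
    using assms(4) unfolding K_def zero_lower_density_points_def by auto
  then obtain s where s: "\<And>y. y \<in> K \<Longrightarrow> 0 < s y \<and> s y < 1 \<and> measure \<nu> (ball y (s y)) < t * s y ^ DIM('a)"
    by metis
  have "K \<subseteq> (\<Union>y\<in>K. cball y (s y / 6))" "\<And>y. y \<in> K \<Longrightarrow> 0 < s y / 6 \<and> s y / 6 \<le> 1"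
    using s by force+
  then obtain C where C: "countable C" "C \<subseteq> K"
    "pairwise (\<lambda>i j. disjnt (cball i (s i / 6)) (cball j (s j / 6))) C"
    "K \<subseteq> (\<Union>i\<in>C. cball i (5 * (s i / 6)))"
    by (rule Vitali_covering_lemma_cballs[where a="\<lambda>y. y"])
  define G where "G = (\<Union>i\<in>C. ball i (s i))"
  have "K \<subseteq> G"
  proof
    fix y assume "y \<in> K"
    then obtain i where "i \<in> C" "y \<in> cball i (5 * (s i / 6))" using C(4) by auto
    moreover have "5 * (s i / 6) < s i" using s[of i] \<open>i \<in> C\<close> C(2) by auto
    ultimately show "y \<in> G" unfolding G_def by force
  qed
  have "emeasure \<nu> G \<le> (\<integral>\<^sup>+i. emeasure \<nu> (ball i (s i)) \<partial>count_space C)"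
    unfolding G_def using C(1) assms(2) by (intro emeasure_UN_countable_le) auto
  also have "\<dots> \<le> (\<integral>\<^sup>+i. c * emeasure lborel (cball i (s i / 6)) \<partial>count_space C)"
    unfolding c_def using s C(2) assms(1,4)
    by (intro nn_integral_mono emeasure_ball_le_lborel_cball) (auto intro: less_imp_le)
  also have "\<dots> = c * (\<integral>\<^sup>+i. emeasure lborel (cball i (s i / 6)) \<partial>count_space C)"
    by (rule nn_integral_cmult) auto
  also have "\<dots> \<le> c * emeasure lborel (cball (0::'a) (R + 1))"
  proof (intro mult_left_mono nn_integral_disjoint_cballs_le C(1,3))
    fix i assume "i \<in> C"
    then have "i \<in> K" using C(2) by auto
    then show "cball i (s i / 6) \<subseteq> cball 0 (R + 1)"
      using s[of i] unfolding K_def cball_subset_cball_iff by (auto simp: dist_norm)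
  qed auto
  also have "\<dots> = ennreal (t * 6 ^ DIM('a) * (R + 1) ^ DIM('a))"
  proof -
    have "unit_ball_vol DIM('a) \<noteq> 0" using unit_ball_vol_pos[of "DIM('a)"] by linarith
    then show ?thesis unfolding c_def using assms(3,4) by (simp add: emeasure_cball flip: ennreal_mult)
  qed
  finally have "emeasure \<nu> G \<le> ennreal (t * 6 ^ DIM('a) * (R + 1) ^ DIM('a))" .
  moreover have "G \<in> sets borel" unfolding G_def by (intro borel_open open_UN) auto
  ultimately show ?thesis using that \<open>K \<subseteq> G\<close> unfolding K_def by blast
qed

lemma null_sets_cover_if_small_covers:
  assumes "\<And>e. e > 0 \<Longrightarrow> \<exists>G\<in>sets M. A \<subseteq> G \<and> emeasure M G \<le> ennreal e"
  obtains H where "H \<in> null_sets M" "A \<subseteq> H"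
proof -
  have "\<forall>j. \<exists>G\<in>sets M. A \<subseteq> G \<and> emeasure M G \<le> ennreal (1 / Suc j)"
    using assms by simp
  then obtain G where G: "\<And>j. G j \<in> sets M" "\<And>j. A \<subseteq> G j" "\<And>j. emeasure M (G j) \<le> ennreal (1 / Suc j)"
    by metis
  note [measurable] = G(1)
  have small: "emeasure M (\<Inter>j. G j) \<le> 0 + ennreal e" if "e > 0" for e
  proof -
    obtain j where "1 / Suc j < e" using reals_Archimedean[OF \<open>e > 0\<close>] by (auto simp: inverse_eq_divide)
    then have "emeasure M (G j) \<le> ennreal e" using G(3)[of j] by (meson ennreal_leI less_imp_le order_trans)
    moreover have "emeasure M (\<Inter>j. G j) \<le> emeasure M (G j)" using G(1) by (intro emeasure_mono) auto
    ultimately show ?thesis by simp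
  qed
  have "emeasure M (\<Inter>j. G j) \<le> 0" by (rule ennreal_le_epsilon) (rule small)
  moreover have "(\<Inter>j. G j) \<in> sets M" by measurable
  ultimately have "(\<Inter>j. G j) \<in> null_sets M" by (simp add: null_setsI)
  then show ?thesis using that G(2) by blast
qed

lemma zero_lower_density_points_null:
  fixes \<nu> :: "'a::euclidean_space measure"
  assumes "finite_measure \<nu>" "sets \<nu> = sets borel"
  obtains H where "H \<in> null_sets \<nu>" "zero_lower_density_points \<nu> \<subseteq> H"
proof -
  have "\<exists>H. H \<in> null_sets \<nu> \<and> zero_lower_density_points \<nu> \<inter> ball 0 (Suc n) \<subseteq> H" for n
  proof -
    define K where "K = 6 ^ DIM('a) * (real (Suc n) + 1) ^ DIM('a)"
    have "K > 0" unfolding K_def by simp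
    have "\<exists>G\<in>sets \<nu>. zero_lower_density_points \<nu> \<inter> ball 0 (Suc n) \<subseteq> G \<and> emeasure \<nu> G \<le> ennreal e"
      if e: "e > 0" for e
    proof -
      obtain G where "G \<in> sets borel" "zero_lower_density_points \<nu> \<inter> ball 0 (Suc n) \<subseteq> G"
        "emeasure \<nu> G \<le> ennreal (e / K * 6 ^ DIM('a) * (real (Suc n) + 1) ^ DIM('a))"
        by (rule zero_lower_density_points_small_cover[OF assms, of "Suc n" "e / K"])
          (use \<open>K > 0\<close> e in auto)
      moreover have "e / K * 6 ^ DIM('a) * (real (Suc n) + 1) ^ DIM('a) = e"
        using \<open>K > 0\<close> unfolding K_def by simp
      ultimately show ?thesis using assms(2) by auto
    qed
    then obtain H where "H \<in> null_sets \<nu>" "zero_lower_density_points \<nu> \<inter> ball 0 (Suc n) \<subseteq> H"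
      by (rule null_sets_cover_if_small_covers)
    then show ?thesis by blast
  qed
  then obtain H where H: "\<And>n. H n \<in> null_sets \<nu>" "\<And>n. zero_lower_density_points \<nu> \<inter> ball 0 (Suc n) \<subseteq> H n"
    by metis
  have "zero_lower_density_points \<nu> \<subseteq> (\<Union>n. H n)"
  proof
    fix y assume "y \<in> zero_lower_density_points \<nu>"
    moreover obtain n where "norm y \<le> real n" using real_arch_simple by blast
    ultimately show "y \<in> (\<Union>n. H n)" using H(2)[of n] by auto
  qed
  with H(1) show ?thesis using that by blast
qed

section \<open>Pulling back along an inverse-Lipschitz map\<close>

lemma measure_distr_ball_le_small_ball_prob:
  fixes X :: "'a \<Rightarrow> 'b::euclidean_space" and d :: "'b \<Rightarrow> 'c::euclidean_space"
  assumes "finite_measure M" and [measurable]: "X \<in> borel_measurable M" "d \<in> borel_measurable borel"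
    and "AE \<omega> in M. X \<omega> \<in> B" "x \<in> B" "L > 0"
    and "\<And>x y. x \<in> B \<Longrightarrow> y \<in> B \<Longrightarrow> norm (x - y) \<le> L * norm (d x - d y)"
  shows "measure (distr M borel (\<lambda>\<omega>. d (X \<omega>))) (ball (d x) r) \<le> small_ball_prob M X x (L * r)"
proof -
  have "AE \<omega> in M. d (X \<omega>) \<in> ball (d x) r \<longrightarrow> norm (X \<omega> - x) < L * r"
    using assms(4)
  proof eventually_elim
    case (elim \<omega>)
    show ?case
    proof
      assume "d (X \<omega>) \<in> ball (d x) r"
      then have "L * norm (d (X \<omega>) - d x) < L * r" using \<open>L > 0\<close> by (simp add: dist_norm norm_minus_commute)
      then show "norm (X \<omega> - x) < L * r" using assms(7)[OF elim \<open>x \<in> B\<close>] by linarith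
    qed
  qed
  then have "measure M {\<omega> \<in> space M. d (X \<omega>) \<in> ball (d x) r} \<le> small_ball_prob M X x (L * r)"
    unfolding small_ball_prob_def by (intro finite_measure.finite_measure_mono_AE[OF assms(1)]) auto
  then show ?thesis by (simp add: measure_distr vimage_def Int_def conj_commute)
qed

lemma not_in_mould_zero_lower_density:
  fixes X :: "'a \<Rightarrow> real^'n" and d :: "real^'n \<Rightarrow> 'b::euclidean_space"
  assumes "finite_measure M" "X \<in> borel_measurable M" "d \<in> borel_measurable borel"
    and "AE \<omega> in M. X \<omega> \<in> B" "L > 0"
    and "\<And>x y. x \<in> B \<Longrightarrow> y \<in> B \<Longrightarrow> norm (x - y) \<le> L * norm (d x - d y)"
    and "x \<in> B" "x \<notin> mould M X DIM('b)"
  shows "d x \<in> zero_lower_density_points (distr M borel (\<lambda>\<omega>. d (X \<omega>)))"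
  unfolding zero_lower_density_points_def
proof (intro CollectI allI impI)
  fix t \<delta> :: real assume "t > 0" "\<delta> > 0"
  define a where "a = t / 2 / L ^ DIM('b)"
  have "a > 0" unfolding a_def using \<open>t > 0\<close> \<open>L > 0\<close> by simp
  have "\<not> eventually (\<lambda>e. a * e ^ DIM('b) < small_ball_prob M X x e) (at_right 0)"
  proof
    assume "eventually (\<lambda>e. a * e ^ DIM('b) < small_ball_prob M X x e) (at_right 0)"
    with \<open>a > 0\<close> have "x \<in> mould M X DIM('b)" unfolding mould_iff_eventually by blast
    with \<open>x \<notin> mould M X DIM('b)\<close> show False by contradiction
  qed
  then have "\<not> (\<forall>e. 0 < e \<and> e < L * \<delta> \<longrightarrow> a * e ^ DIM('b) < small_ball_prob M X x e)"
    unfolding eventually_at_right_field using mult_pos_pos[OF \<open>L > 0\<close> \<open>\<delta> > 0\<close>] by blast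
  then obtain e where e: "0 < e" "e < L * \<delta>" "small_ball_prob M X x e \<le> a * e ^ DIM('b)"
    by (auto simp: not_less)
  have "measure (distr M borel (\<lambda>\<omega>. d (X \<omega>))) (ball (d x) (e / L)) \<le> small_ball_prob M X x e"
    using measure_distr_ball_le_small_ball_prob[OF assms(1-4,7,5,6), of "e / L"] \<open>L > 0\<close> by simp
  also have "\<dots> \<le> t / 2 * (e / L) ^ DIM('b)" using e(3) unfolding a_def by (simp add: power_divide)
  also have "\<dots> < t * (e / L) ^ DIM('b)" using \<open>t > 0\<close> \<open>L > 0\<close> e(1) by simp
  finally show "\<exists>r>0. r < \<delta> \<and> measure (distr M borel (\<lambda>\<omega>. d (X \<omega>))) (ball (d x) r) < t * r ^ DIM('b)"
    using e(1,2) \<open>L > 0\<close> by (intro exI[of _ "e / L"]) (simp add: field_simps)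
qed

lemma AE_in_mould_if_inverse_Lipschitz:
  fixes X :: "'a \<Rightarrow> real^'n" and d :: "real^'n \<Rightarrow> 'b::euclidean_space"
  assumes "finite_measure M" and [measurable]: "X \<in> borel_measurable M" "d \<in> borel_measurable borel"
    and "AE \<omega> in M. X \<omega> \<in> B" "L > 0"
    and "\<And>x y. x \<in> B \<Longrightarrow> y \<in> B \<Longrightarrow> norm (x - y) \<le> L * norm (d x - d y)"
  shows "AE \<omega> in M. X \<omega> \<in> mould M X DIM('b)"
proof -
  define \<nu> where "\<nu> = distr M borel (\<lambda>\<omega>. d (X \<omega>))"
  have "finite_measure \<nu>" unfolding \<nu>_def by (intro finite_measure.finite_measure_distr[OF assms(1)]) simp
  moreover have "sets \<nu> = sets borel" unfolding \<nu>_def by simp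
  ultimately obtain H where H: "H \<in> null_sets \<nu>" "zero_lower_density_points \<nu> \<subseteq> H"
    by (rule zero_lower_density_points_null)
  have "(\<lambda>\<omega>. d (X \<omega>)) \<in> measurable M borel" by measurable
  moreover have "AE y in \<nu>. y \<notin> H" using H(1) by (rule AE_not_in)
  ultimately have "AE \<omega> in M. d (X \<omega>) \<notin> H" unfolding \<nu>_def by (rule AE_distrD)
  then show ?thesis using assms(4)
  proof eventually_elim
    case (elim \<omega>)
    then show ?case using not_in_mould_zero_lower_density[OF assms] H(2) unfolding \<nu>_def by blast
  qed
qed

theorem mainTheorem7:
  fixes M :: "'a measure" and X :: "'a \<Rightarrow> real^'n" and B :: "(real^'n) set"
    and d :: "real^'n \<Rightarrow> real^'k" and c :: real and m :: nat
    and Nn :: "real^'n \<Rightarrow> real" and Nm :: "real^'k \<Rightarrow> real"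
  assumes "prob_space M"
    and "X \<in> borel_measurable M"
    and "B \<in> sets borel"
    and "AE \<omega> in M. X \<omega> \<in> B"
    and "CARD('k) = m"
    and "d \<in> borel_measurable (restrict_space borel B)"
    and "c > 0"
    and "is_norm Nn" and "is_norm Nm"
    and "\<forall>x\<in>B. \<forall>y\<in>B. Nm (d x - d y) \<ge> c * Nn (x - y)"
  shows "measure M {\<omega> \<in> space M. X \<omega> \<in> mould M X m} = 1"
proof -
  interpret prob_space M by fact
  have "\<And>x y. x \<in> B \<Longrightarrow> y \<in> B \<Longrightarrow> c * Nn (x - y) \<le> Nm (d x - d y)" using assms(10) by blast
  then obtain L where L: "L > 0" "\<And>x y. x \<in> B \<Longrightarrow> y \<in> B \<Longrightarrow> norm (x - y) \<le> L * norm (d x - d y)"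
    by (rule expanding_map_inverse_Lipschitz[OF assms(8,9,7)]) auto
  define d' where "d' x = (if x \<in> B then d x else 0)" for x
  have "d' \<in> borel_measurable borel"
    unfolding d'_def using assms(3,6) by (simp add: measurable_restrict_space_iff)
  moreover have "norm (x - y) \<le> L * norm (d' x - d' y)" if "x \<in> B" "y \<in> B" for x y
    using L(2)[OF that] that by (simp add: d'_def)
  ultimately have "AE \<omega> in M. X \<omega> \<in> mould M X DIM(real^'k)"
    using AE_in_mould_if_inverse_Lipschitz[OF _ assms(2) _ assms(4) L(1)] finite_measure_axioms by blast
  moreover have "mould M X m \<in> sets borel" using sets_borel_mould[OF finite_measure_axioms assms(2)] .
  ultimately show ?thesis using assms(2,5) by (simp add: prob_Collect_eq_1)
qed

end
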